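(* Let $P_n$ be the path with $n$ vertices. (i) If $0\leq \alpha < \frac{1}{2}$, then for $1\leq k\leq n$, $$S_k(A_{\alpha}(P_n)) \leq 2\alpha k+\alpha-1+\alpha \csc\frac{\pi}{2n} \sin\frac{(2k+1)\pi}{2n} +(1-2\alpha)\csc\frac{\pi}{2(n+1)} \sin\frac{(2k+1)\pi}{2(n+1)}.$$ (ii) If $\frac{1}{2}\leq \alpha \leq 1$, then for $1\leq k\leq n$, $$S_k(A_{\alpha}(P_n))\leq 2\alpha k+(1-\alpha)\left(\csc\frac{\pi}{2n} \sin\frac{(2k+1)\pi}{2n}-1\right).$$
   Context: $A_{\alpha}(G)=\alpha D(G)+(1-\alpha)A(G)$, where $A(G)$ is the adjacency matrix and $D(G)$ the diagonal degree matrix. For a real symmetric matrix $M$ with eigenvalues $\lambda_1(M)\geq\cdots\geq\lambda_n(M)$, $S_k(M)=\sum_{i=1}^k\lambda_i(M)$. *)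

theory Defs
  imports "Jordan_Normal_Form.Char_Poly" "HOL-Library.Multiset" Complex_Main
begin

definition path_adj :: "nat \<Rightarrow> real mat" where
  "path_adj n = mat n n (\<lambda>(i, j). if i + 1 = j \<or> j + 1 = i then 1 else 0)"

definition path_deg :: "nat \<Rightarrow> real mat" where
  "path_deg n = mat n n (\<lambda>(i, j). if i = j then (\<Sum>l<n. path_adj n $$ (i, l)) else 0)"

definition A_alpha_path :: "real \<Rightarrow> nat \<Rightarrow> real mat" where
  "A_alpha_path \<alpha> n = \<alpha> \<cdot>\<^sub>m path_deg n + (1 - \<alpha>) \<cdot>\<^sub>m path_adj n"

definition eigenvalues_desc :: "real mat \<Rightarrow> real list" where
  "eigenvalues_desc M = rev (sorted_list_of_multiset (proots (char_poly M)))"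

definition S_k :: "nat \<Rightarrow> real mat \<Rightarrow> real" where
  "S_k k M = sum_list (take k (eigenvalues_desc M))"

end

(*
  By Ky Fan's maximum principle, S_k(M) is the largest value of the sum of x_i^T M x_i over
  orthonormal families x_1, ..., x_k, so S_k is positively homogeneous and subadditive on real
  symmetric matrices. With Q = D + A the signless Laplacian of P_n,
    A_alpha(P_n) = alpha Q + (1 - 2 alpha) A          for alpha < 1/2,
    A_alpha(P_n) = (1 - alpha) Q + (2 alpha - 1) D    for alpha >= 1/2,
  and both combinations have nonnegative coefficients. The spectra of Q and A are explicit,
  2 + 2 cos (m pi / n) and 2 cos (m pi / (n + 1)) with sine eigenvectors, the sum of the k largest
  is a Dirichlet kernel, and S_k(D) <= 2k because every degree is at most 2.
*)

theory Submission
  imports Defs "Jordan_Normal_Form.Spectral_Radius" "HOL-Combinatorics.List_Permutation"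
begin

section \<open>The spectral theorem for real symmetric matrices\<close>

(* Not the library's orthogonal_mat, which only asks for pairwise orthogonal columns. *)
definition orthonormal_mat :: "nat \<Rightarrow> real mat \<Rightarrow> bool" where
  "orthonormal_mat n P \<longleftrightarrow> P \<in> carrier_mat n n \<and> P\<^sup>T * P = 1\<^sub>m n"

lemma orthonormal_matD:
  assumes "orthonormal_mat n P"
  shows "P \<in> carrier_mat n n" "P\<^sup>T * P = 1\<^sub>m n" "P * P\<^sup>T = 1\<^sub>m n"
  using assms mat_mult_left_right_inverse[of "P\<^sup>T" n P] unfolding orthonormal_mat_def by auto

lemma orthonormal_mat_mult:
  assumes P: "orthonormal_mat n P" and Q: "orthonormal_mat n Q"
  shows "orthonormal_mat n (P * Q)"
proof -
  note P = orthonormal_matD[OF P] and Q = orthonormal_matD[OF Q]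
  have PQ: "(P * Q)\<^sup>T * (P * Q) = Q\<^sup>T * ((P\<^sup>T * P) * Q)"
    using P(1) Q(1) by (simp add: transpose_mult[of _ n n _ n] assoc_mult_mat[of _ n n _ n _ n])
  have "(P * Q)\<^sup>T * (P * Q) = 1\<^sub>m n" unfolding PQ P(2) using Q by simp
  thus ?thesis using P Q unfolding orthonormal_mat_def by simp
qed

lemma orthonormal_mat_col_inner:
  assumes "orthonormal_mat n P" "a < n" "b < n"
  shows "(\<Sum>l<n. P $$ (l, a) * P $$ (l, b)) = (if a = b then 1 else 0)"
proof -
  have "(P\<^sup>T * P) $$ (a, b) = (\<Sum>l<n. P $$ (l, a) * P $$ (l, b))"
    using assms orthonormal_matD(1)[OF assms(1)] by (simp add: scalar_prod_def lessThan_atLeast0)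
  thus ?thesis using assms orthonormal_matD(2)[OF assms(1)] by simp
qed

lemma orthonormal_mat_row_inner:
  assumes "orthonormal_mat n P" "a < n" "b < n"
  shows "(\<Sum>l<n. P $$ (a, l) * P $$ (b, l)) = (if a = b then 1 else 0)"
proof -
  have "(P * P\<^sup>T) $$ (a, b) = (\<Sum>l<n. P $$ (a, l) * P $$ (b, l))"
    using assms orthonormal_matD(1)[OF assms(1)] by (simp add: scalar_prod_def lessThan_atLeast0)
  thus ?thesis using assms orthonormal_matD(3)[OF assms(1)] by simp
qed

lemma unit_vec_extends_to_orthonormal_mat:
  fixes u :: "real vec"
  assumes u: "u \<in> carrier_vec n" and uu: "u \<bullet> u = 1"
  shows "\<exists>W. orthonormal_mat n W \<and> col W 0 = u"
proof -
  have n: "n > 0" using u uu by (cases n) (auto simp: scalar_prod_def)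
  interpret cof_vec_space n "TYPE(real)" .
  define b where "b = basis_completion u"
  have "u \<noteq> 0\<^sub>v n" using uu by auto
  from basis_completion[OF u this, folded b_def]
  have b: "distinct b" "\<not> lin_dep (set b)" "set b \<subseteq> carrier_vec n" "hd b = u" "length b = n"
    by auto
  then obtain vs where bv: "b = u # vs" using n by (cases b) auto
  define ws where "ws = gram_schmidt n b"
  from gram_schmidt_result[OF b(3,1,2) ws_def]
  have ws: "set ws \<subseteq> carrier_vec n" "corthogonal ws" "length ws = n"
    by (auto simp: b(5))
  have ws0: "ws ! 0 = u"
    using gram_schmidt_hd[OF u, of vs, folded bv ws_def] n ws(3) by (metis hd_conv_nth length_0_conv not_gr0)
  have ws_pos: "ws ! i \<bullet> ws ! i > 0" if "i < n" for i
  proof -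
    have "ws ! i \<bullet> ws ! i \<noteq> 0" using corthogonalD[OF ws(2), of i i] that ws(3) by simp
    moreover have "ws ! i \<bullet> ws ! i \<ge> 0" by (simp add: scalar_prod_def sum_nonneg)
    ultimately show ?thesis by linarith
  qed
  define us where "us = map (\<lambda>w. (1 / sqrt (w \<bullet> w)) \<cdot>\<^sub>v w) ws"
  have us: "us ! i \<in> carrier_vec n" if "i < n" for i using that ws unfolding us_def by auto
  have us_inner: "us ! i \<bullet> us ! j = (if i = j then 1 else 0)" if "i < n" "j < n" for i j
  proof -
    have ws_c: "ws ! i \<in> carrier_vec n" "ws ! j \<in> carrier_vec n" using that ws by auto
    have "us ! i \<bullet> us ! j
        = (1 / sqrt (ws!i \<bullet> ws!i)) * (1 / sqrt (ws!j \<bullet> ws!j)) * (ws ! i \<bullet> ws ! j)"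
      unfolding us_def using that ws ws_c by simp
    moreover have "ws ! i \<bullet> ws ! j = 0" if "i \<noteq> j"
      using corthogonalD[OF ws(2), of i j] that \<open>i < n\<close> \<open>j < n\<close> ws(3) by simp
    moreover have "(1 / sqrt (ws!i \<bullet> ws!i)) * (1 / sqrt (ws!i \<bullet> ws!i)) * (ws ! i \<bullet> ws ! i) = 1"
      using ws_pos[OF that(1)] by (simp add: field_simps)
    ultimately show ?thesis by auto
  qed
  define W where "W = mat_of_cols n us"
  have W: "W \<in> carrier_mat n n"
    unfolding W_def us_def using ws(3) mat_of_cols_carrier(1) by (metis length_map)
  have col_W: "col W i = us ! i" if "i < n" for i unfolding W_def using that us ws(3) us_def by simp
  have "W\<^sup>T * W = 1\<^sub>m n"
    by (rule eq_matI) (use W in \<open>auto simp: col_W us_inner\<close>)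
  moreover have "col W 0 = u"
    using col_W[OF n] uu ws0 n ws(3) unfolding us_def by simp
  ultimately show ?thesis using W unfolding orthonormal_mat_def by blast
qed

lemma real_symmetric_complex_eigenvalue_real:
  fixes A :: "real mat"
  assumes A: "A \<in> carrier_mat n n" and sym: "A\<^sup>T = A"
    and z: "eigenvalue (map_mat complex_of_real A) z"
  shows "cnj z = z"
proof -
  let ?C = "map_mat complex_of_real A"
  obtain v where v: "v \<in> carrier_vec n" "v \<noteq> 0\<^sub>v n" "?C *\<^sub>v v = z \<cdot>\<^sub>v v"
    using z A unfolding eigenvalue_def eigenvector_def by auto
  have Cv: "(?C *\<^sub>v v) $ i = (\<Sum>j<n. complex_of_real (A $$ (i, j)) * v $ j)" if "i < n" for i
    using that A v(1) by (simp add: scalar_prod_def row_def lessThan_atLeast0)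
  define s where "s = (\<Sum>i<n. cnj (v $ i) * (?C *\<^sub>v v) $ i)"
  define N where "N = (\<Sum>i<n. (cmod (v $ i))\<^sup>2)"
  have s_eig: "s = z * N"
    unfolding s_def N_def v(3) using v(1)
    by (simp add: sum_distrib_left algebra_simps complex_norm_square del: of_real_power)
  have s_sum: "s = (\<Sum>i<n. \<Sum>j<n. cnj (v $ i) * complex_of_real (A $$ (i, j)) * v $ j)"
    unfolding s_def by (simp add: Cv sum_distrib_left mult.assoc)
  have A_ij: "A $$ (i, j) = A $$ (j, i)" if "i < n" "j < n" for i j
    using sym that A by (metis carrier_matD index_transpose_mat(1))
  \<comment> \<open>the Hermitian form of a real symmetric matrix is real\<close>
  have "cnj s = (\<Sum>i<n. \<Sum>j<n. v $ i * complex_of_real (A $$ (i, j)) * cnj (v $ j))"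
    unfolding s_sum by simp
  also have "\<dots> = (\<Sum>j<n. \<Sum>i<n. v $ i * complex_of_real (A $$ (i, j)) * cnj (v $ j))"
    by (rule sum.swap)
  also have "\<dots> = s"
    unfolding s_sum by (intro sum.cong refl) (simp add: A_ij mult.commute mult.left_commute)
  finally have "cnj z * N = z * N" unfolding s_eig by simp
  moreover have "N > 0"
  proof -
    obtain i where "i < n" "v $ i \<noteq> 0" using v(1,2) by (metis carrier_vecD eq_vecI index_zero_vec)
    thus ?thesis unfolding N_def by (intro sum_pos2[of _ i]) auto
  qed
  ultimately show ?thesis by simp
qed

lemma real_symmetric_unit_eigenvector:
  fixes A :: "real mat"
  assumes A: "A \<in> carrier_mat n n" and sym: "A\<^sup>T = A" and n: "n > 0"
  shows "\<exists>e u. u \<in> carrier_vec n \<and> u \<bullet> u = 1 \<and> A *\<^sub>v u = e \<cdot>\<^sub>v u"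
proof -
  let ?C = "map_mat complex_of_real A"
  have C: "?C \<in> carrier_mat n n" using A by simp
  obtain z where "eigenvalue ?C z"
    using spectrum_non_empty[OF C n] unfolding spectrum_def by auto
  moreover from this have "z = complex_of_real (Re z)"
    using real_symmetric_complex_eigenvalue_real[OF A sym] by (metis Reals_cnj_iff of_real_Re)
  ultimately have "poly (char_poly ?C) (complex_of_real (Re z)) = 0"
    using eigenvalue_root_char_poly[OF C] by simp
  hence "poly (char_poly A) (Re z) = 0"
    by (simp add: of_real_hom.char_poly_hom[OF A])
  then obtain v where v: "v \<in> carrier_vec n" "v \<noteq> 0\<^sub>v n" "A *\<^sub>v v = Re z \<cdot>\<^sub>v v"
    using eigenvalue_root_char_poly[OF A] A unfolding eigenvalue_def eigenvector_def by auto
  have "v \<bullet> v > 0"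
  proof -
    obtain i where i: "i < n" "v $ i \<noteq> 0" using v(1,2) by (metis carrier_vecD eq_vecI index_zero_vec)
    have "(\<Sum>j<n. v $ j * v $ j) > 0"
      by (rule sum_pos2[of _ i]) (use i in \<open>auto simp: zero_less_mult_iff linorder_neq_iff\<close>)
    thus ?thesis using v(1) by (simp add: scalar_prod_def lessThan_atLeast0)
  qed
  define u where "u = (1 / sqrt (v \<bullet> v)) \<cdot>\<^sub>v v"
  have "u \<in> carrier_vec n" "u \<bullet> u = 1" "A *\<^sub>v u = Re z \<cdot>\<^sub>v u"
    unfolding u_def using v A \<open>v \<bullet> v > 0\<close>
    by (simp_all add: mult_mat_vec smult_smult_assoc field_simps)
  thus ?thesis by blast
qed

lemma four_block_diag_mult:
  fixes A B C D :: "'a :: semiring_1 mat"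
  assumes "A \<in> carrier_mat n1 n1" "B \<in> carrier_mat n2 n2" "C \<in> carrier_mat n1 n1" "D \<in> carrier_mat n2 n2"
  shows "four_block_mat A (0\<^sub>m n1 n2) (0\<^sub>m n2 n1) B * four_block_mat C (0\<^sub>m n1 n2) (0\<^sub>m n2 n1) D
       = four_block_mat (A * C) (0\<^sub>m n1 n2) (0\<^sub>m n2 n1) (B * D)"
  using assms by (simp add: mult_four_block_mat[OF assms(1) zero_carrier_mat zero_carrier_mat assms(2)
      assms(3) zero_carrier_mat zero_carrier_mat assms(4)])

lemma transpose_conj_mat:
  fixes P A :: "'a :: comm_semiring_1 mat"
  assumes P: "P \<in> carrier_mat n m" and A: "A \<in> carrier_mat n n"
  shows "(P\<^sup>T * A * P)\<^sup>T = P\<^sup>T * A\<^sup>T * P"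
proof -
  have PA: "P\<^sup>T * A \<in> carrier_mat m n" using P A by simp
  have "(P\<^sup>T * A * P)\<^sup>T = P\<^sup>T * (P\<^sup>T * A)\<^sup>T" using transpose_mult[OF PA P] by simp
  also have "(P\<^sup>T * A)\<^sup>T = A\<^sup>T * P" using transpose_mult[of "P\<^sup>T" m n A n] P A by simp
  finally show ?thesis using assoc_mult_mat[of "P\<^sup>T" m n "A\<^sup>T" n P m] P A by simp
qed

lemma conj_mat_index:
  fixes W A :: "'a :: comm_semiring_1 mat"
  assumes W: "W \<in> carrier_mat n n" and A: "A \<in> carrier_mat n n" and ij: "i < n" "j < n"
  shows "(W\<^sup>T * A * W) $$ (i, j) = col W i \<bullet> (A *\<^sub>v col W j)"
proof -
  have "W\<^sup>T * A * W = W\<^sup>T * (A * W)" using W A by simp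
  thus ?thesis using W A ij by (simp add: col_mult2 mult_mat_vec_def)
qed

lemma orthonormal_deflation:
  fixes A :: "real mat"
  assumes A: "A \<in> carrier_mat (Suc m) (Suc m)" and sym: "A\<^sup>T = A"
    and W: "orthonormal_mat (Suc m) W" and eig: "A *\<^sub>v col W 0 = e \<cdot>\<^sub>v col W 0"
  shows "\<exists>B. B \<in> carrier_mat m m \<and> B\<^sup>T = B \<and>
           W\<^sup>T * A * W = four_block_mat (mat_diag 1 (\<lambda>_. e)) (0\<^sub>m 1 m) (0\<^sub>m m 1) B"
proof -
  let ?n = "Suc m"
  note W = orthonormal_matD[OF W]
  define A' where "A' = W\<^sup>T * A * W"
  have A': "A' \<in> carrier_mat ?n ?n" unfolding A'_def using mult_carrier_mat[OF mult_carrier_mat[OF _ A] W(1)] W(1) by simp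
  have A'_sym: "A' $$ (j, i) = A' $$ (i, j)" if "i < ?n" "j < ?n" for i j
  proof -
    have "A'\<^sup>T = A'" unfolding A'_def transpose_conj_mat[OF W(1) A] sym ..
    thus ?thesis using A' that by (metis carrier_matD index_transpose_mat(1))
  qed
  have A'_col0: "A' $$ (i, 0) = (if i = 0 then e else 0)" if i: "i < ?n" for i
  proof -
    have "A' $$ (i, 0) = col W i \<bullet> (e \<cdot>\<^sub>v col W 0)"
      unfolding A'_def conj_mat_index[OF W(1) A i zero_less_Suc] eig ..
    also have "\<dots> = e * (W\<^sup>T * W) $$ (i, 0)" using i W(1) by simp
    finally show ?thesis using i W(2) by simp
  qed
  define B where "B = mat m m (\<lambda>(i, j). A' $$ (Suc i, Suc j))"
  have "B\<^sup>T = B" by (rule eq_matI) (auto simp: B_def A'_sym)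
  moreover have "A' = four_block_mat (mat_diag 1 (\<lambda>_. e)) (0\<^sub>m 1 m) (0\<^sub>m m 1) B"
  proof (rule eq_matI)
    fix i j assume "i < dim_row (four_block_mat (mat_diag 1 (\<lambda>_. e)) (0\<^sub>m 1 m) (0\<^sub>m m 1) B)"
      "j < dim_col (four_block_mat (mat_diag 1 (\<lambda>_. e)) (0\<^sub>m 1 m) (0\<^sub>m m 1) B)"
    hence ij: "i < ?n" "j < ?n" by (auto simp: B_def mat_diag_def)
    show "A' $$ (i, j) = four_block_mat (mat_diag 1 (\<lambda>_. e)) (0\<^sub>m 1 m) (0\<^sub>m m 1) B $$ (i, j)"
    proof (cases j)
      case 0
      thus ?thesis using ij A'_col0[OF ij(1)] by (cases i) (auto simp: B_def mat_diag_def)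
    next
      case (Suc j')
      thus ?thesis using ij A'_col0[OF ij(2)] A'_sym[OF ij(2) ij(1)]
        by (cases i) (auto simp: B_def mat_diag_def)
    qed
  qed (use A' in \<open>auto simp: B_def mat_diag_def\<close>)
  moreover have "B \<in> carrier_mat m m" by (simp add: B_def)
  ultimately show ?thesis unfolding A'_def by blast
qed

lemma mult_conj_mat:
  fixes P Q X :: "'a :: comm_semiring_1 mat"
  assumes P: "P \<in> carrier_mat n n" and Q: "Q \<in> carrier_mat n n" and X: "X \<in> carrier_mat n n"
  shows "P * (Q * X * Q\<^sup>T) * P\<^sup>T = (P * Q) * X * (P * Q)\<^sup>T"
proof -
  have QX: "Q * X \<in> carrier_mat n n" using Q X by simp
  have QXQ: "Q * X * Q\<^sup>T \<in> carrier_mat n n" using QX Q by simp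
  have "P * (Q * X * Q\<^sup>T) * P\<^sup>T = P * (Q * X) * Q\<^sup>T * P\<^sup>T"
    using assoc_mult_mat[OF P QX, of "Q\<^sup>T" n] Q by simp
  also have "\<dots> = (P * Q) * X * (Q\<^sup>T * P\<^sup>T)"
    using assoc_mult_mat[OF P Q X] assoc_mult_mat[of "P * Q * X" n n "Q\<^sup>T" n "P\<^sup>T" n] P Q X by simp
  also have "Q\<^sup>T * P\<^sup>T = (P * Q)\<^sup>T" using transpose_mult[OF P Q] ..
  finally show ?thesis .
qed

lemma orthonormal_mat_four_block_one:
  assumes "orthonormal_mat m Q"
  shows "orthonormal_mat (Suc m) (four_block_mat (1\<^sub>m 1) (0\<^sub>m 1 m) (0\<^sub>m m 1) Q)"
proof -
  note Q = orthonormal_matD[OF assms]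
  let ?Q' = "four_block_mat (1\<^sub>m 1) (0\<^sub>m 1 m) (0\<^sub>m m 1) Q"
  have "?Q'\<^sup>T * ?Q' = four_block_mat (1\<^sub>m 1 * 1\<^sub>m 1) (0\<^sub>m 1 m) (0\<^sub>m m 1) (Q\<^sup>T * Q)"
    unfolding transpose_four_block_mat[OF one_carrier_mat zero_carrier_mat zero_carrier_mat Q(1)]
    by (simp only: zero_transpose_mat transpose_one) (rule four_block_diag_mult; use Q in auto)
  also have "\<dots> = 1\<^sub>m (Suc m)" using Q(2) four_block_one_mat[of 1 m] by simp
  finally show ?thesis using Q(1) unfolding orthonormal_mat_def by auto
qed

lemma four_block_one_conj_mat_diag:
  fixes Q :: "'a :: semiring_1 mat"
  assumes Q: "Q \<in> carrier_mat m m"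
  defines "Q' \<equiv> four_block_mat (1\<^sub>m 1) (0\<^sub>m 1 m) (0\<^sub>m m 1) Q"
  shows "Q' * mat_diag (Suc m) (\<lambda>i. if i = 0 then e else d (i - 1)) * Q'\<^sup>T
       = four_block_mat (mat_diag 1 (\<lambda>_. e)) (0\<^sub>m 1 m) (0\<^sub>m m 1) (Q * mat_diag m d * Q\<^sup>T)"
proof -
  have E: "mat_diag 1 (\<lambda>_. e) \<in> carrier_mat 1 1" by simp
  have D_block: "mat_diag (Suc m) (\<lambda>i. if i = 0 then e else d (i - 1))
      = four_block_mat (mat_diag 1 (\<lambda>_. e)) (0\<^sub>m 1 m) (0\<^sub>m m 1) (mat_diag m d)"
    by (rule eq_matI) (auto simp: mat_diag_def)
  have Q'D: "Q' * mat_diag (Suc m) (\<lambda>i. if i = 0 then e else d (i - 1))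
      = four_block_mat (1\<^sub>m 1 * mat_diag 1 (\<lambda>_. e)) (0\<^sub>m 1 m) (0\<^sub>m m 1) (Q * mat_diag m d)"
    unfolding Q'_def D_block by (rule four_block_diag_mult) (use Q in auto)
  have Q'_T: "Q'\<^sup>T = four_block_mat (1\<^sub>m 1) (0\<^sub>m 1 m) (0\<^sub>m m 1) Q\<^sup>T"
    unfolding Q'_def
    using transpose_four_block_mat[OF one_carrier_mat zero_carrier_mat zero_carrier_mat Q] by simp
  have "Q' * mat_diag (Suc m) (\<lambda>i. if i = 0 then e else d (i - 1)) * Q'\<^sup>T
      = four_block_mat (1\<^sub>m 1 * mat_diag 1 (\<lambda>_. e) * 1\<^sub>m 1) (0\<^sub>m 1 m) (0\<^sub>m m 1) (Q * mat_diag m d * Q\<^sup>T)"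
    unfolding Q'D Q'_T
    by (rule four_block_diag_mult[OF mult_carrier_mat[OF one_carrier_mat E]]) (use Q in auto)
  thus ?thesis unfolding left_mult_one_mat[OF E] right_mult_one_mat[OF E] .
qed

theorem real_symmetric_orthonormal_diagonalization:
  fixes A :: "real mat"
  assumes "A \<in> carrier_mat n n" "A\<^sup>T = A"
  shows "\<exists>P d. orthonormal_mat n P \<and> A = P * mat_diag n d * P\<^sup>T"
  using assms
proof (induction n arbitrary: A)
  case 0
  hence "A = 1\<^sub>m 0 * mat_diag 0 (\<lambda>_. 0) * (1\<^sub>m 0)\<^sup>T" by (auto intro!: eq_matI)
  moreover have "orthonormal_mat 0 (1\<^sub>m 0)" by (simp add: orthonormal_mat_def)
  ultimately show ?case by blast
next
  case (Suc m A)
  let ?n = "Suc m"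
  obtain e u where u: "u \<in> carrier_vec ?n" "u \<bullet> u = 1" "A *\<^sub>v u = e \<cdot>\<^sub>v u"
    using real_symmetric_unit_eigenvector[OF Suc.prems] by blast
  obtain W where W: "orthonormal_mat ?n W" "col W 0 = u"
    using unit_vec_extends_to_orthonormal_mat[OF u(1,2)] by blast
  obtain B where B: "B \<in> carrier_mat m m" "B\<^sup>T = B"
    and WAW: "W\<^sup>T * A * W = four_block_mat (mat_diag 1 (\<lambda>_. e)) (0\<^sub>m 1 m) (0\<^sub>m m 1) B"
    using orthonormal_deflation[OF Suc.prems W(1)] u(3) W(2) by blast
  obtain Q d where Q: "orthonormal_mat m Q" and BQ: "B = Q * mat_diag m d * Q\<^sup>T"
    using Suc.IH[OF B] by blast
  define Q' where "Q' = four_block_mat (1\<^sub>m 1) (0\<^sub>m 1 m) (0\<^sub>m m 1) Q"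
  define d' where "d' i = (if i = 0 then e else d (i - 1))" for i
  have Q': "orthonormal_mat ?n Q'" unfolding Q'_def by (rule orthonormal_mat_four_block_one[OF Q])
  note W' = orthonormal_matD[OF W(1)]
  have "A = (W * W\<^sup>T) * A * (W * W\<^sup>T)" using W'(3) Suc.prems(1) by simp
  also have "\<dots> = W * (W\<^sup>T * A * W) * W\<^sup>T"
    using W'(1) Suc.prems(1) by (simp add: assoc_mult_mat[of _ ?n ?n _ ?n _ ?n])
  also have "W\<^sup>T * A * W = Q' * mat_diag ?n d' * Q'\<^sup>T"
    unfolding WAW BQ Q'_def d'_def four_block_one_conj_mat_diag[OF orthonormal_matD(1)[OF Q]] ..
  also have "W * \<dots> * W\<^sup>T = (W * Q') * mat_diag ?n d' * (W * Q')\<^sup>T"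
    using mult_conj_mat[OF W'(1) orthonormal_matD(1)[OF Q'] mat_diag_dim] .
  finally show ?case using orthonormal_mat_mult[OF W(1) Q'] by blast
qed

lemma proots_prod_linear_factors: "proots (\<Prod>a\<leftarrow>xs. [:- a, 1:]) = mset (xs :: real list)"
proof (induction xs)
  case (Cons x xs)
  have "(\<Prod>a\<leftarrow>xs. [:- a, 1:]) \<noteq> 0" by (auto simp: prod_list_zero_iff)
  hence "proots (\<Prod>a\<leftarrow>x # xs. [:- a, 1:]) = proots [:- x, 1:] + proots (\<Prod>a\<leftarrow>xs. [:- a, 1:])"
    unfolding list.map prod_list.Cons by (intro proots_mult) auto
  also have "proots [:- x, 1:] = {#x#}" using proots_linear_factor[of "- x"] by simp
  finally show ?case using Cons.IH by (metis add_mset_add_single add.commute mset.simps(2))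
qed simp

lemma eigenvalues_desc_orthonormal_diag:
  assumes P: "orthonormal_mat n P"
  shows "eigenvalues_desc (P * mat_diag n d * P\<^sup>T) = rev (sort (map d [0..<n]))"
proof -
  note P = orthonormal_matD[OF P]
  have "similar_mat (P * mat_diag n d * P\<^sup>T) (mat_diag n d)"
    unfolding similar_mat_def similar_mat_wit_def Let_def
    by (rule exI[of _ P], rule exI[of _ "P\<^sup>T"]) (use P in auto)
  hence "char_poly (P * mat_diag n d * P\<^sup>T) = char_poly (mat_diag n d)"
    by (rule char_poly_similar)
  also have "\<dots> = (\<Prod>a\<leftarrow>diag_mat (mat_diag n d). [:- a, 1:])"
    by (rule char_poly_upper_triangular[of _ n]) (auto simp: upper_triangular_def mat_diag_def)
  also have "diag_mat (mat_diag n d) = map d [0..<n]"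
    by (simp add: diag_mat_def mat_diag_def)
  finally have cp: "char_poly (P * mat_diag n d * P\<^sup>T) = (\<Prod>a\<leftarrow>map d [0..<n]. [:- a, 1:])" .
  show ?thesis
    unfolding eigenvalues_desc_def cp proots_prod_linear_factors sorted_list_of_multiset_mset
    by (rule refl)
qed

lemma eigenvalues_desc_of_strictly_decreasing_eigenvalues:
  fixes A :: "real mat" and \<mu> :: "nat \<Rightarrow> real"
  assumes A: "A \<in> carrier_mat n n"
    and eig: "\<And>m. 1 \<le> m \<Longrightarrow> m \<le> n \<Longrightarrow> eigenvalue A (\<mu> m)"
    and decr: "\<And>m m'. 1 \<le> m \<Longrightarrow> m < m' \<Longrightarrow> m' \<le> n \<Longrightarrow> \<mu> m' < \<mu> m"
  shows "eigenvalues_desc A = map \<mu> [1..<n+1]"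
proof -
  let ?xs = "rev (map \<mu> [1..<n+1])"
  have "sorted_wrt (<) ?xs"
    unfolding sorted_wrt_rev sorted_wrt_map
    by (auto simp del: upt_Suc simp: sorted_wrt_iff_nth_less intro!: decr)
  hence xs: "sorted ?xs" "distinct ?xs" by (auto simp: strict_sorted_iff)
  have cp: "char_poly A \<noteq> 0" using degree_monic_char_poly[OF A] by auto
  have "set ?xs \<subseteq> set_mset (proots (char_poly A))"
    using eig eigenvalue_root_char_poly[OF A] cp by auto
  hence "mset ?xs \<subseteq># proots (char_poly A)"
    using mset_set_set[OF xs(2)] mset_set_set_mset_msubset subset_imp_msubset_mset_set
    by (metis finite_set_mset subset_mset.order_trans)
  moreover have "size (proots (char_poly A)) \<le> size (mset ?xs)"
    using size_proots_le[of "char_poly A"] degree_monic_char_poly[OF A] by (simp del: upt_Suc)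
  ultimately have "proots (char_poly A) = mset ?xs"
    using mset_subset_size by (metis leD subset_mset.le_less)
  hence "eigenvalues_desc A = rev (sort ?xs)"
    unfolding eigenvalues_desc_def by (simp only: sorted_list_of_multiset_mset)
  thus ?thesis unfolding sorted_sort_id[OF xs(1)] rev_rev_ident .
qed

section \<open>Ky Fan's maximum principle\<close>

definition quad_form :: "nat \<Rightarrow> real mat \<Rightarrow> (nat \<Rightarrow> real) \<Rightarrow> real" where
  "quad_form n M x = (\<Sum>a<n. \<Sum>b<n. x a * M $$ (a, b) * x b)"

lemma quad_form_smult_add:
  assumes "X \<in> carrier_mat n n" "Y \<in> carrier_mat n n"
  shows "quad_form n (s \<cdot>\<^sub>m X + t \<cdot>\<^sub>m Y) x = s * quad_form n X x + t * quad_form n Y x"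
proof -
  have "x a * (s \<cdot>\<^sub>m X + t \<cdot>\<^sub>m Y) $$ (a, b) * x b
      = s * (x a * X $$ (a, b) * x b) + t * (x a * Y $$ (a, b) * x b)" if "a < n" "b < n" for a b
    using that assms by (simp add: algebra_simps)
  hence "quad_form n (s \<cdot>\<^sub>m X + t \<cdot>\<^sub>m Y) x
      = (\<Sum>a<n. \<Sum>b<n. s * (x a * X $$ (a, b) * x b) + t * (x a * Y $$ (a, b) * x b))"
    unfolding quad_form_def by (intro sum.cong refl) simp
  thus ?thesis unfolding quad_form_def by (simp add: sum.distrib sum_distrib_left)
qed

lemma quad_form_conj_mat_diag:
  assumes P: "P \<in> carrier_mat n n"
  shows "quad_form n (P * mat_diag n d * P\<^sup>T) x = (\<Sum>l<n. d l * (\<Sum>a<n. P $$ (a, l) * x a)\<^sup>2)"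
proof -
  have entry: "(P * mat_diag n d * P\<^sup>T) $$ (a, b) = (\<Sum>l<n. P $$ (a, l) * d l * P $$ (b, l))"
    if "a < n" "b < n" for a b
    using that P by (simp add: mat_diag_mult_right[OF P] scalar_prod_def lessThan_atLeast0)
  have summand: "x a * (\<Sum>l<n. P $$ (a, l) * d l * P $$ (b, l)) * x b
      = (\<Sum>l<n. d l * ((P $$ (a, l) * x a) * (P $$ (b, l) * x b)))" for a b
    unfolding sum_distrib_left sum_distrib_right by (rule sum.cong[OF refl]) (simp only: mult_ac)
  have "quad_form n (P * mat_diag n d * P\<^sup>T) x
      = (\<Sum>a<n. \<Sum>b<n. \<Sum>l<n. d l * ((P $$ (a, l) * x a) * (P $$ (b, l) * x b)))"
    unfolding quad_form_def summand[symmetric] by (intro sum.cong refl) (simp add: entry)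
  also have "\<dots> = (\<Sum>l<n. \<Sum>a<n. \<Sum>b<n. d l * ((P $$ (a, l) * x a) * (P $$ (b, l) * x b)))"
    by (subst sum.swap, subst (2) sum.swap, rule refl)
  also have "\<dots> = (\<Sum>l<n. d l * (\<Sum>a<n. P $$ (a, l) * x a)\<^sup>2)"
    by (unfold power2_eq_square, unfold sum_product, unfold sum_distrib_left) (rule refl)
  finally show ?thesis .
qed

lemma sum_power2_orthonormal_transform:
  assumes U: "orthonormal_mat n U"
  shows "(\<Sum>l<n. (\<Sum>a<n. U $$ (a, l) * x a)\<^sup>2) = (\<Sum>a<n. (x a)\<^sup>2)"
proof -
  have "(\<Sum>l<n. (\<Sum>a<n. U $$ (a, l) * x a)\<^sup>2) = (\<Sum>l<n. \<Sum>a<n. \<Sum>b<n. x a * x b * (U $$ (a, l) * U $$ (b, l)))"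
    by (simp add: power2_eq_square sum_product mult_ac)
  also have "\<dots> = (\<Sum>a<n. \<Sum>l<n. \<Sum>b<n. x a * x b * (U $$ (a, l) * U $$ (b, l)))"
    by (rule sum.swap)
  also have "\<dots> = (\<Sum>a<n. \<Sum>b<n. x a * x b * (\<Sum>l<n. U $$ (a, l) * U $$ (b, l)))"
  proof (rule sum.cong[OF refl])
    fix a
    have "(\<Sum>l<n. \<Sum>b<n. x a * x b * (U $$ (a, l) * U $$ (b, l)))
        = (\<Sum>b<n. \<Sum>l<n. x a * x b * (U $$ (a, l) * U $$ (b, l)))"
      by (rule sum.swap)
    thus "(\<Sum>l<n. \<Sum>b<n. x a * x b * (U $$ (a, l) * U $$ (b, l)))
        = (\<Sum>b<n. x a * x b * (\<Sum>l<n. U $$ (a, l) * U $$ (b, l)))"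
      by (simp add: sum_distrib_left)
  qed
  also have "\<dots> = (\<Sum>a<n. (x a)\<^sup>2)"
    by (simp add: orthonormal_mat_row_inner[OF U] power2_eq_square if_distrib cong: if_cong)
  finally show ?thesis .
qed

lemma weighted_sum_le_sum_initial:
  fixes y w :: "nat \<Rightarrow> real"
  assumes decr: "\<And>i j. i \<le> j \<Longrightarrow> j < n \<Longrightarrow> y j \<le> y i"
    and w: "\<And>j. j < n \<Longrightarrow> 0 \<le> w j \<and> w j \<le> 1"
    and w_sum: "(\<Sum>j<n. w j) = real k"
  shows "(\<Sum>j<n. y j * w j) \<le> (\<Sum>j<k. y j)"
proof -
  have "real k \<le> real n" using sum_mono[of "{..<n}" w "\<lambda>_. 1"] w w_sum by simp
  hence k: "k \<le> n" by simp
  \<comment> \<open>compare with the threshold c: y j \<ge> c before k, y j \<le> c from k on\<close>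
  define c where "c = y (k - 1)"
  have split: "(\<Sum>j<n. f j) = (\<Sum>j<k. f j) + (\<Sum>j\<in>{k..<n}. f j)" for f :: "nat \<Rightarrow> real"
    using k by (metis atLeast0LessThan le_add_diff_inverse sum.atLeastLessThan_concat zero_le)
  have head: "y j * w j \<le> y j + c * (w j - 1)" if "j < k" for j
  proof -
    have "(y j - c) * (w j - 1) \<le> 0"
      using decr[of j "k - 1"] w[of j] that k unfolding c_def by (intro mult_nonneg_nonpos) auto
    thus ?thesis by (simp add: algebra_simps)
  qed
  have tail: "y j * w j \<le> c * w j" if "j \<in> {k..<n}" for j
    using decr[of "k - 1" j] w[of j] that unfolding c_def by (intro mult_right_mono) auto
  have "(\<Sum>j<n. y j * w j) \<le> (\<Sum>j<k. y j + c * (w j - 1)) + (\<Sum>j\<in>{k..<n}. c * w j)"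
    unfolding split[of "\<lambda>j. y j * w j"] by (intro add_mono sum_mono head tail) auto
  also have "\<dots> = (\<Sum>j<k. y j) + c * ((\<Sum>j<k. w j) + (\<Sum>j\<in>{k..<n}. w j) - k)"
    by (simp add: sum.distrib sum_distrib_left sum_subtractf algebra_simps)
  also have "(\<Sum>j<k. w j) + (\<Sum>j\<in>{k..<n}. w j) = real k" using split[of w] w_sum by simp
  finally show ?thesis by simp
qed

lemma rev_sort_nth_antimono:
  fixes xs :: "'a :: linorder list"
  assumes "i \<le> j" "j < length xs"
  shows "rev (sort xs) ! j \<le> rev (sort xs) ! i"
  using assms sorted_nth_mono[OF sorted_sort, of "length xs - Suc j" "length xs - Suc i" xs]
  by (simp add: rev_nth)

lemma rev_sort_map_reindex:
  "\<exists>f. bij_betw f {..<n} {..<n} \<and> (\<forall>j<n. rev (sort (map d [0..<n])) ! j = d (f j))"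
proof -
  have "mset (rev (sort (map d [0..<n]))) = mset (map d [0..<n])" by simp
  from permutation_Ex_bij[OF this] obtain f where
    f: "bij_betw f {..<n} {..<n}" and nth: "\<forall>j<n. rev (sort (map d [0..<n])) ! j = map d [0..<n] ! f j"
    by auto
  have "f j < n" if "j < n" for j using f that by (auto simp: bij_betw_def)
  thus ?thesis using f nth by auto
qed

lemma S_k_orthonormal_diag:
  assumes P: "orthonormal_mat n P" and f: "\<forall>j<n. rev (sort (map d [0..<n])) ! j = d (f j)"
    and k: "k \<le> n"
  shows "S_k k (P * mat_diag n d * P\<^sup>T) = (\<Sum>j<k. d (f j))"
proof -
  have "S_k k (P * mat_diag n d * P\<^sup>T) = (\<Sum>j<k. rev (sort (map d [0..<n])) ! j)"
    unfolding S_k_def eigenvalues_desc_orthonormal_diag[OF P] using k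
    by (simp add: sum_list_sum_nth lessThan_atLeast0 min_absorb1)
  thus ?thesis using f k by simp
qed

lemma orthonormal_overlap_weights:
  assumes P: "orthonormal_mat n P" and R: "orthonormal_mat n R" and I: "I \<subseteq> {..<n}"
  defines "w l \<equiv> \<Sum>i\<in>I. (\<Sum>a<n. P $$ (a, l) * R $$ (a, i))\<^sup>2"
  shows "l < n \<Longrightarrow> 0 \<le> w l \<and> w l \<le> 1" and "(\<Sum>l<n. w l) = real (card I)"
proof -
  define c where "c l i = (\<Sum>a<n. P $$ (a, l) * R $$ (a, i))" for l i
  show "0 \<le> w l \<and> w l \<le> 1" if l: "l < n"
  proof
    show "0 \<le> w l" unfolding w_def by (simp add: sum_nonneg)
    have "w l \<le> (\<Sum>i<n. (c l i)\<^sup>2)"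
      unfolding w_def c_def by (rule sum_mono2) (use I in auto)
    also have "\<dots> = (\<Sum>a<n. (P $$ (a, l))\<^sup>2)"
      unfolding c_def using sum_power2_orthonormal_transform[OF R, of "\<lambda>a. P $$ (a, l)"]
      by (simp add: mult.commute)
    also have "\<dots> = 1" using orthonormal_mat_col_inner[OF P l l] by (simp add: power2_eq_square)
    finally show "w l \<le> 1" .
  qed
  have "(\<Sum>l<n. (c l i)\<^sup>2) = 1" if "i \<in> I" for i
  proof -
    have "(\<Sum>l<n. (c l i)\<^sup>2) = (\<Sum>a<n. (R $$ (a, i))\<^sup>2)"
      unfolding c_def by (rule sum_power2_orthonormal_transform[OF P])
    also have "\<dots> = 1"
      using orthonormal_mat_col_inner[OF R, of i i] that I by (auto simp: power2_eq_square)
    finally show ?thesis .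
  qed
  thus "(\<Sum>l<n. w l) = real (card I)"
    unfolding w_def c_def[symmetric] by (subst sum.swap) simp
qed

theorem S_k_ge_sum_quad_form:
  fixes A R :: "real mat"
  assumes A: "A \<in> carrier_mat n n" and sym: "A\<^sup>T = A" and R: "orthonormal_mat n R"
    and I: "I \<subseteq> {..<n}" "card I = k"
  shows "(\<Sum>i\<in>I. quad_form n A (\<lambda>a. R $$ (a, i))) \<le> S_k k A"
proof -
  obtain P d where P: "orthonormal_mat n P" and AP: "A = P * mat_diag n d * P\<^sup>T"
    using real_symmetric_orthonormal_diagonalization[OF A sym] by blast
  obtain f where f: "bij_betw f {..<n} {..<n}" and f_nth: "\<forall>j<n. rev (sort (map d [0..<n])) ! j = d (f j)"
    using rev_sort_map_reindex by blast
  have f_lt: "f j < n" if "j < n" for j using f that by (auto simp: bij_betw_def)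
  have k: "k \<le> n" using I card_mono[OF _ I(1)] by fastforce
  \<comment> \<open>in the eigenbasis the sum becomes \<Sum> d l * w l with weights in [0, 1] summing to k\<close>
  define w where "w l = (\<Sum>i\<in>I. (\<Sum>a<n. P $$ (a, l) * R $$ (a, i))\<^sup>2)" for l
  note w = orthonormal_overlap_weights[OF P R I(1), folded w_def]
  have "(\<Sum>i\<in>I. quad_form n A (\<lambda>a. R $$ (a, i))) = (\<Sum>l<n. d l * w l)"
    unfolding w_def AP quad_form_conj_mat_diag[OF orthonormal_matD(1)[OF P]]
    by (subst sum.swap) (simp add: sum_distrib_left)
  also have "\<dots> = (\<Sum>j<n. d (f j) * w (f j))"
    using sum.reindex_bij_betw[OF f, of "\<lambda>l. d l * w l"] by simp
  also have "\<dots> \<le> (\<Sum>j<k. d (f j))"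
  proof (rule weighted_sum_le_sum_initial)
    show "d (f j) \<le> d (f i)" if "i \<le> j" "j < n" for i j
      using rev_sort_nth_antimono[of i j "map d [0..<n]"] f_nth that by simp
    show "0 \<le> w (f j) \<and> w (f j) \<le> 1" if "j < n" for j using w(1) f_lt[OF that] .
    show "(\<Sum>j<n. w (f j)) = real k" using sum.reindex_bij_betw[OF f, of w] w(2) I(2) by simp
  qed
  also have "\<dots> = S_k k A" unfolding AP using S_k_orthonormal_diag[OF P f_nth k] ..
  finally show ?thesis .
qed

lemma S_k_eq_sum_quad_form:
  fixes A :: "real mat"
  assumes A: "A \<in> carrier_mat n n" and sym: "A\<^sup>T = A" and k: "k \<le> n"
  shows "\<exists>P I. orthonormal_mat n P \<and> I \<subseteq> {..<n} \<and> card I = k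
     \<and> S_k k A = (\<Sum>i\<in>I. quad_form n A (\<lambda>a. P $$ (a, i)))"
proof -
  obtain P d where P: "orthonormal_mat n P" and AP: "A = P * mat_diag n d * P\<^sup>T"
    using real_symmetric_orthonormal_diagonalization[OF A sym] by blast
  obtain f where f: "bij_betw f {..<n} {..<n}" and f_nth: "\<forall>j<n. rev (sort (map d [0..<n])) ! j = d (f j)"
    using rev_sort_map_reindex by blast
  have f_lt: "f j < n" if "j < n" for j using f that by (auto simp: bij_betw_def)
  have inj: "inj_on f {..<k}" using f k by (meson bij_betw_def inj_on_subset lessThan_subset_iff)
  have col_eigen: "quad_form n A (\<lambda>a. P $$ (a, i)) = d i" if i: "i < n" for i
  proof -
    have "quad_form n A (\<lambda>a. P $$ (a, i)) = (\<Sum>l<n. d l * (\<Sum>a<n. P $$ (a, l) * P $$ (a, i))\<^sup>2)"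
      unfolding AP quad_form_conj_mat_diag[OF orthonormal_matD(1)[OF P]] ..
    also have "\<dots> = (\<Sum>l<n. if l = i then d l else 0)"
      by (intro sum.cong refl) (simp add: orthonormal_mat_col_inner[OF P] i)
    finally show ?thesis using i by simp
  qed
  have "S_k k A = (\<Sum>j<k. d (f j))" unfolding AP using S_k_orthonormal_diag[OF P f_nth k] .
  also have "\<dots> = (\<Sum>j<k. quad_form n A (\<lambda>a. P $$ (a, f j)))"
    using col_eigen f_lt k by (intro sum.cong refl) auto
  also have "\<dots> = (\<Sum>i\<in>f ` {..<k}. quad_form n A (\<lambda>a. P $$ (a, i)))"
    by (simp add: sum.reindex[OF inj])
  finally show ?thesis
    using P f k card_image[OF inj] by (intro exI[of _ P] exI[of _ "f ` {..<k}"]) (auto simp: bij_betw_def)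
qed

theorem S_k_smult_add_le:
  fixes X Y :: "real mat"
  assumes X: "X \<in> carrier_mat n n" "X\<^sup>T = X" and Y: "Y \<in> carrier_mat n n" "Y\<^sup>T = Y"
    and st: "0 \<le> s" "0 \<le> t" and k: "k \<le> n"
  shows "S_k k (s \<cdot>\<^sub>m X + t \<cdot>\<^sub>m Y) \<le> s * S_k k X + t * S_k k Y"
proof -
  let ?M = "s \<cdot>\<^sub>m X + t \<cdot>\<^sub>m Y"
  have "?M\<^sup>T = s \<cdot>\<^sub>m X\<^sup>T + t \<cdot>\<^sub>m Y\<^sup>T" by (rule eq_matI) (use X(1) Y(1) in auto)
  hence M: "?M \<in> carrier_mat n n" "?M\<^sup>T = ?M" unfolding X(2) Y(2) using X Y by auto
  obtain P I where P: "orthonormal_mat n P" and I: "I \<subseteq> {..<n}" "card I = k"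
    and SM: "S_k k ?M = (\<Sum>i\<in>I. quad_form n ?M (\<lambda>a. P $$ (a, i)))"
    using S_k_eq_sum_quad_form[OF M k] by blast
  have "S_k k ?M = s * (\<Sum>i\<in>I. quad_form n X (\<lambda>a. P $$ (a, i))) + t * (\<Sum>i\<in>I. quad_form n Y (\<lambda>a. P $$ (a, i)))"
    unfolding SM quad_form_smult_add[OF X(1) Y(1)] by (simp add: sum.distrib sum_distrib_left)
  also have "\<dots> \<le> s * S_k k X + t * S_k k Y"
    using S_k_ge_sum_quad_form[OF X P I] S_k_ge_sum_quad_form[OF Y P I] st
    by (intro add_mono mult_left_mono) auto
  finally show ?thesis .
qed

lemma S_k_mat_diag_le:
  assumes le: "\<And>i. i < n \<Longrightarrow> d i \<le> c" and "0 \<le> c"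
  shows "S_k k (mat_diag n d) \<le> real k * c"
proof -
  let ?ys = "take k (rev (sort (map d [0..<n])))"
  have "1\<^sub>m n * mat_diag n d * (1\<^sub>m n)\<^sup>T = mat_diag n d"
    by (simp add: left_mult_one_mat[OF mat_diag_dim] right_mult_one_mat[OF mat_diag_dim])
  hence "S_k k (mat_diag n d) = sum_list ?ys"
    unfolding S_k_def using eigenvalues_desc_orthonormal_diag[of n "1\<^sub>m n" d]
    by (simp add: orthonormal_mat_def)
  also have "\<dots> \<le> (\<Sum>x\<leftarrow>?ys. c)"
  proof -
    have "x \<le> c" if "x \<in> set ?ys" for x using that le by (auto dest!: in_set_takeD)
    thus ?thesis using sum_list_mono[of ?ys "\<lambda>x. x" "\<lambda>_. c"] by simp
  qed
  also have "\<dots> \<le> real k * c" using assms(2) by (simp add: sum_list_triv mult_right_mono)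
  finally show ?thesis .
qed

section \<open>Spectra of the path\<close>

lemma sin_diff_add_sin_add: "sin (u - v) + sin (u + v) = 2 * sin u * cos (v :: real)"
  by (simp add: sin_add sin_diff)

lemma cos_mult_pi_div_strict_decreasing:
  assumes "m < m'" "real m' \<le> N"
  shows "cos (real m' * pi / N) < cos (real m * pi / N)"
proof (rule cos_monotone_0_pi)
  have N: "0 < N" using assms by linarith
  show "0 \<le> real m * pi / N" using N by simp
  show "real m * pi / N < real m' * pi / N" using assms N by (simp add: divide_strict_right_mono)
  show "real m' * pi / N \<le> pi" using assms N by (simp add: pos_divide_le_eq)
qed

lemma sum_two_cos_mult:
  fixes \<theta> :: real
  assumes s: "sin (\<theta> / 2) \<noteq> 0"
  shows "(\<Sum>m=1..k. 2 * cos (real m * \<theta>)) = sin ((2 * real k + 1) * \<theta> / 2) / sin (\<theta> / 2) - 1"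
proof (induction k)
  case (Suc k)
  \<comment> \<open>telescoping: 2 cos (m \<theta>) sin (\<theta>/2) = sin ((2m + 1) \<theta>/2) - sin ((2m - 1) \<theta>/2)\<close>
  have "2 * cos (real (Suc k) * \<theta>) * sin (\<theta> / 2)
      = sin ((2 * real (Suc k) + 1) * \<theta> / 2) - sin ((2 * real k + 1) * \<theta> / 2)"
  proof -
    have e: "(2 * real (Suc k) + 1) * \<theta> / 2 = real (Suc k) * \<theta> + \<theta> / 2"
      "(2 * real k + 1) * \<theta> / 2 = real (Suc k) * \<theta> - \<theta> / 2" by (simp_all add: field_simps)
    show ?thesis unfolding e by (simp add: sin_add sin_diff)
  qed
  thus ?case using Suc.IH s by (simp add: field_simps)
qed (use s in simp)

lemma sin_pi_div_pos: "1 \<le> N \<Longrightarrow> sin (pi / (2 * N)) > 0"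
  by (rule sin_gt_zero) (simp_all add: field_simps)

lemma mat_diag_mult_vec_index:
  assumes "a < n"
  shows "(mat_diag n f *\<^sub>v vec n x) $ a = f a * x a"
proof -
  have "(mat_diag n f *\<^sub>v vec n x) $ a = (\<Sum>i = 0..<n. (if a = i then f i else 0) * x i)"
    using assms by (simp add: mat_diag_def scalar_prod_def)
  also have "\<dots> = (\<Sum>i = 0..<n. if a = i then f i * x i else 0)" by (rule sum.cong) auto
  finally show ?thesis using assms by simp
qed

lemma eigenvalue_of_sampled_eigenvector:
  fixes M :: "real mat" and g :: "real \<Rightarrow> real"
  assumes "M \<in> carrier_mat n n" "0 < n" "g 0 \<noteq> 0"
    and "\<And>a. a < n \<Longrightarrow> (M *\<^sub>v vec n (\<lambda>i. g (real i))) $ a = c * g (real a)"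
  shows "eigenvalue M c"
proof -
  have "vec n (\<lambda>i. g (real i)) \<noteq> 0\<^sub>v n" using assms(2,3) by (metis index_vec index_zero_vec(1) of_nat_0)
  moreover have "M *\<^sub>v vec n (\<lambda>i. g (real i)) = c \<cdot>\<^sub>v vec n (\<lambda>i. g (real i))"
    by (rule eq_vecI) (use assms in auto)
  ultimately show ?thesis
    using assms(1) unfolding eigenvalue_def eigenvector_def by (intro exI[of _ "vec n (\<lambda>i. g (real i))"]) auto
qed

lemma S_k_eq_sum_eigenvalues:
  assumes "eigenvalues_desc M = map f [1..<n+1]" "k \<le> n"
  shows "S_k k M = (\<Sum>m=1..k. f m)"
proof -
  have "take k (map f [1..<n+1]) = map f [1..<k+1]" using assms(2) by (simp add: take_map del: upt_Suc)
  thus ?thesis unfolding S_k_def assms(1)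
    by (simp add: sum_list_distinct_conv_sum_set atLeastLessThanSuc_atLeastAtMost del: upt_Suc)
qed

definition path_degree :: "nat \<Rightarrow> nat \<Rightarrow> real" where
  "path_degree n a = (if 0 < a then 1 else 0) + (if a + 1 < n then 1 else 0)"

lemma path_adj_dim [simp]: "dim_row (path_adj n) = n" "dim_col (path_adj n) = n"
  unfolding path_adj_def by simp_all

lemma path_adj_carrier [simp]: "path_adj n \<in> carrier_mat n n"
  unfolding carrier_mat_def by simp

lemma path_adj_index:
  "a < n \<Longrightarrow> b < n \<Longrightarrow> path_adj n $$ (a, b) = (if a + 1 = b \<or> b + 1 = a then 1 else 0)"
  unfolding path_adj_def by simp

lemma path_adj_symmetric: "(path_adj n)\<^sup>T = path_adj n"
  by (rule eq_matI) (auto simp: path_adj_index)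

lemma path_adj_mult_vec:
  assumes a: "a < n"
  shows "(path_adj n *\<^sub>v vec n x) $ a = (if 0 < a then x (a - 1) else 0) + (if a + 1 < n then x (a + 1) else 0)"
proof -
  have "(path_adj n *\<^sub>v vec n x) $ a = (\<Sum>b<n. (if a + 1 = b \<or> b + 1 = a then 1 else 0) * x b)"
    using a by (auto simp: scalar_prod_def lessThan_atLeast0 path_adj_index intro!: sum.cong)
  also have "\<dots> = (\<Sum>b<n. (if b = a + 1 then x b else 0) + (if 0 < a \<and> b = a - 1 then x b else 0))"
    by (intro sum.cong refl) auto
  also have "\<dots> = (\<Sum>b<n. if b = a + 1 then x b else 0) + (\<Sum>b<n. if 0 < a \<and> b = a - 1 then x b else 0)"
    by (rule sum.distrib)
  finally show ?thesis using a by (cases "0 < a") (simp_all add: sum.delta')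
qed

lemma path_deg_eq_mat_diag: "path_deg n = mat_diag n (path_degree n)"
proof (rule eq_matI)
  fix a b assume "a < dim_row (mat_diag n (path_degree n))" "b < dim_col (mat_diag n (path_degree n))"
  hence ab: "a < n" "b < n" by (auto simp: mat_diag_def)
  have "(\<Sum>l<n. path_adj n $$ (a, l)) = (path_adj n *\<^sub>v vec n (\<lambda>_. 1)) $ a"
    using ab by (simp add: scalar_prod_def lessThan_atLeast0)
  also have "\<dots> = path_degree n a" unfolding path_adj_mult_vec[OF ab(1)] path_degree_def ..
  finally show "path_deg n $$ (a, b) = mat_diag n (path_degree n) $$ (a, b)"
    using ab unfolding path_deg_def mat_diag_def by auto
qed (simp_all add: path_deg_def mat_diag_def)

lemma path_deg_dim [simp]: "dim_row (path_deg n) = n" "dim_col (path_deg n) = n"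
  unfolding path_deg_def by simp_all

lemma path_deg_carrier [simp]: "path_deg n \<in> carrier_mat n n"
  unfolding carrier_mat_def by simp

lemma path_deg_symmetric: "(path_deg n)\<^sup>T = path_deg n"
  unfolding path_deg_eq_mat_diag by (rule eq_matI) (auto simp: mat_diag_def)

lemma path_signless_laplacian_symmetric: "(path_deg n + path_adj n)\<^sup>T = path_deg n + path_adj n"
  by (simp add: transpose_add[OF path_deg_carrier path_adj_carrier] path_deg_symmetric path_adj_symmetric)

lemma path_adj_mult_sampled_vec:
  fixes g :: "real \<Rightarrow> real"
  assumes a: "a < n"
  shows "(path_adj n *\<^sub>v vec n (\<lambda>i. g (real i))) $ a
       = g (real a - 1) + g (real a + 1) - (if a = 0 then g (- 1) else 0) - (if a + 1 = n then g (real n) else 0)"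
  unfolding path_adj_mult_vec[OF a] using a
  by (cases "a = 0"; cases "a + 1 = n") (auto simp: of_nat_diff algebra_simps)

lemma path_adj_eigenvalue:
  assumes m: "1 \<le> m" "m \<le> n"
  shows "eigenvalue (path_adj n) (2 * cos (real m * pi / (real n + 1)))"
proof -
  define h where "h = real m * pi / (real n + 1)"
  \<comment> \<open>Dirichlet eigenvector x_a = sin ((a + 1) h), vanishing at the virtual vertices -1 and n\<close>
  define g where "g t = sin ((t + 1) * h)" for t :: real
  have "real m * pi < (real n + 1) * pi" using m by (intro mult_strict_right_mono) auto
  hence h: "0 < h" "h < pi" unfolding h_def using m by (auto simp: pos_divide_less_eq)
  have g_n: "g (real n) = 0"
  proof -
    have "(real n + 1) * h = real m * pi" unfolding h_def by simp
    thus ?thesis unfolding g_def by (simp add: sin_npi)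
  qed
  have g_rec: "g (t - 1) + g (t + 1) = 2 * cos h * g t" for t
    using sin_diff_add_sin_add[of "(t + 1) * h" h] unfolding g_def by (simp add: algebra_simps)
  show ?thesis unfolding h_def[symmetric]
  proof (rule eigenvalue_of_sampled_eigenvector[of _ n g])
    show "g 0 \<noteq> 0" unfolding g_def using h sin_gt_zero by fastforce
    show "(path_adj n *\<^sub>v vec n (\<lambda>i. g (real i))) $ a = 2 * cos h * g (real a)" if "a < n" for a
      unfolding path_adj_mult_sampled_vec[OF that] g_rec g_n by (simp add: g_def)
  qed (use m in auto)
qed

lemma path_signless_laplacian_eigenvalue:
  assumes m: "1 \<le> m" "m \<le> n"
  shows "eigenvalue (path_deg n + path_adj n) (2 + 2 * cos (real m * pi / real n))"
proof -
  define h where "h = real m * pi / (2 * real n)"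
  \<comment> \<open>Neumann eigenvector x_a = sin ((2a + 1) h): x_(-1) = -x_0 and x_n = -x_(n-1)\<close>
  define g where "g t = sin ((2 * t + 1) * h)" for t :: real
  have h: "0 < h" "h \<le> pi / 2" unfolding h_def using m by (auto simp: field_simps)
  have g_0: "g 0 + g (- 1) = 0" unfolding g_def by simp
  have g_n: "g (real n - 1) + g (real n) = 0"
  proof -
    have "g (real n - 1) + g (real n) = sin (2 * real n * h - h) + sin (2 * real n * h + h)"
      unfolding g_def by (simp add: algebra_simps)
    also have "\<dots> = 2 * sin (real m * pi) * cos h"
      unfolding sin_diff_add_sin_add h_def using m by simp
    finally show ?thesis by (simp add: sin_npi)
  qed
  have g_rec: "g (t - 1) + g (t + 1) = 2 * cos (2 * h) * g t" for t
    using sin_diff_add_sin_add[of "(2 * t + 1) * h" "2 * h"] unfolding g_def by (simp add: algebra_simps)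
  have "2 * h = real m * pi / real n" unfolding h_def using m by simp
  show ?thesis unfolding \<open>2 * h = real m * pi / real n\<close>[symmetric]
  proof (rule eigenvalue_of_sampled_eigenvector[of _ n g])
    show "g 0 \<noteq> 0" unfolding g_def using h sin_gt_zero by fastforce
    fix a assume a: "a < n"
    have deg: "path_degree n a * g (real a) - (if a = 0 then g (- 1) else 0)
        - (if a + 1 = n then g (real n) else 0) = 2 * g (real a)"
      using a g_0 g_n by (cases "a = 0"; cases "a + 1 = n") (auto simp: path_degree_def)
    have "((path_deg n + path_adj n) *\<^sub>v vec n (\<lambda>i. g (real i))) $ a
        = path_degree n a * g (real a) + (path_adj n *\<^sub>v vec n (\<lambda>i. g (real i))) $ a"
      unfolding add_mult_distrib_mat_vec[OF path_deg_carrier path_adj_carrier vec_carrier]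
      unfolding path_deg_eq_mat_diag using a by (simp add: mat_diag_mult_vec_index)
    also have "\<dots> = 2 * g (real a) + (g (real a - 1) + g (real a + 1))"
      unfolding path_adj_mult_sampled_vec[OF a] using deg by linarith
    also have "\<dots> = (2 + 2 * cos (2 * h)) * g (real a)"
      unfolding g_rec by (simp add: algebra_simps)
    finally show "((path_deg n + path_adj n) *\<^sub>v vec n (\<lambda>i. g (real i))) $ a = (2 + 2 * cos (2 * h)) * g (real a)" .
  qed (use m in auto)
qed

lemma eigenvalues_desc_path_adj:
  "eigenvalues_desc (path_adj n) = map (\<lambda>m. 2 * cos (real m * pi / (real n + 1))) [1..<n+1]"
  by (rule eigenvalues_desc_of_strictly_decreasing_eigenvalues)
    (auto simp: path_adj_eigenvalue cos_mult_pi_div_strict_decreasing)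

lemma eigenvalues_desc_path_signless_laplacian:
  "eigenvalues_desc (path_deg n + path_adj n) = map (\<lambda>m. 2 + 2 * cos (real m * pi / real n)) [1..<n+1]"
  by (rule eigenvalues_desc_of_strictly_decreasing_eigenvalues)
    (auto simp: path_signless_laplacian_eigenvalue cos_mult_pi_div_strict_decreasing)

lemma S_k_path_adj:
  assumes "k \<le> n"
  shows "S_k k (path_adj n)
    = sin (real (2 * k + 1) * pi / real (2 * (n + 1))) / sin (pi / real (2 * (n + 1))) - 1"
proof -
  have s: "sin ((pi / (real n + 1)) / 2) \<noteq> 0"
    using sin_pi_div_pos[of "real n + 1"] by (simp add: field_simps)
  have "S_k k (path_adj n) = (\<Sum>m=1..k. 2 * cos (real m * (pi / (real n + 1))))"
    using S_k_eq_sum_eigenvalues[OF eigenvalues_desc_path_adj assms] by simp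
  also have "\<dots> = sin ((2 * real k + 1) * (pi / (real n + 1)) / 2) / sin ((pi / (real n + 1)) / 2) - 1"
    by (rule sum_two_cos_mult[OF s])
  finally show ?thesis by (simp add: field_simps)
qed

lemma S_k_path_signless_laplacian:
  assumes "k \<le> n" "0 < n"
  shows "S_k k (path_deg n + path_adj n)
    = 2 * real k + sin (real (2 * k + 1) * pi / real (2 * n)) / sin (pi / real (2 * n)) - 1"
proof -
  have s: "sin ((pi / real n) / 2) \<noteq> 0"
    using sin_pi_div_pos[of "real n"] assms(2) by (simp add: field_simps)
  have "S_k k (path_deg n + path_adj n) = (\<Sum>m=1..k. 2 + 2 * cos (real m * (pi / real n)))"
    using S_k_eq_sum_eigenvalues[OF eigenvalues_desc_path_signless_laplacian assms(1)] by simp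
  also have "\<dots> = 2 * real k + (sin ((2 * real k + 1) * (pi / real n) / 2) / sin ((pi / real n) / 2) - 1)"
    using sum_two_cos_mult[OF s, of k] by (simp add: sum.distrib)
  finally show ?thesis by (simp add: field_simps)
qed

lemma S_k_path_deg_le: "S_k k (path_deg n) \<le> 2 * real k"
  unfolding path_deg_eq_mat_diag using S_k_mat_diag_le[of n "path_degree n" 2 k]
  by (simp add: path_degree_def mult.commute)

lemma A_alpha_path_eq_signless_laplacian_adj:
  "A_alpha_path \<alpha> n = \<alpha> \<cdot>\<^sub>m (path_deg n + path_adj n) + (1 - 2 * \<alpha>) \<cdot>\<^sub>m path_adj n"
  unfolding A_alpha_path_def by (rule eq_matI) (auto simp: algebra_simps)

lemma A_alpha_path_eq_signless_laplacian_deg: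
  "A_alpha_path \<alpha> n = (1 - \<alpha>) \<cdot>\<^sub>m (path_deg n + path_adj n) + (2 * \<alpha> - 1) \<cdot>\<^sub>m path_deg n"
  unfolding A_alpha_path_def by (rule eq_matI) (auto simp: algebra_simps)

theorem theorem4p4:
  fixes \<alpha> :: real and n k :: nat
  assumes "1 \<le> k" and "k \<le> n"
  shows "(0 \<le> \<alpha> \<and> \<alpha> < 1/2 \<longrightarrow>
           S_k k (A_alpha_path \<alpha> n) \<le>
             2 * \<alpha> * k + \<alpha> - 1
             + \<alpha> * (1 / sin (pi / (2 * n))) * sin ((2 * k + 1) * pi / (2 * n))
             + (1 - 2 * \<alpha>) * (1 / sin (pi / (2 * (n + 1)))) * sin ((2 * k + 1) * pi / (2 * (n + 1))))
       \<and> (1/2 \<le> \<alpha> \<and> \<alpha> \<le> 1 \<longrightarrow>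
           S_k k (A_alpha_path \<alpha> n) \<le>
             2 * \<alpha> * k + (1 - \<alpha>) * ((1 / sin (pi / (2 * n))) * sin ((2 * k + 1) * pi / (2 * n)) - 1))"
proof -
  let ?D = "path_deg n" and ?A = "path_adj n"
  have Q: "?D + ?A \<in> carrier_mat n n" "(?D + ?A)\<^sup>T = ?D + ?A"
    by (simp_all add: path_signless_laplacian_symmetric)
  have "0 < n" using assms by simp
  note S_Q = S_k_path_signless_laplacian[OF assms(2) this] and S_A = S_k_path_adj[OF assms(2)]
  show ?thesis
  proof (intro conjI impI)
    assume "0 \<le> \<alpha> \<and> \<alpha> < 1/2"
    hence "S_k k (A_alpha_path \<alpha> n) \<le> \<alpha> * S_k k (?D + ?A) + (1 - 2 * \<alpha>) * S_k k ?A"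
      unfolding A_alpha_path_eq_signless_laplacian_adj
      by (intro S_k_smult_add_le[OF Q path_adj_carrier path_adj_symmetric _ _ assms(2)]) auto
    thus "S_k k (A_alpha_path \<alpha> n) \<le> 2 * \<alpha> * k + \<alpha> - 1
             + \<alpha> * (1 / sin (pi / (2 * n))) * sin ((2 * k + 1) * pi / (2 * n))
             + (1 - 2 * \<alpha>) * (1 / sin (pi / (2 * (n + 1)))) * sin ((2 * k + 1) * pi / (2 * (n + 1)))"
      unfolding S_Q S_A by (simp add: algebra_simps)
  next
    assume \<alpha>: "1/2 \<le> \<alpha> \<and> \<alpha> \<le> 1"
    hence "S_k k (A_alpha_path \<alpha> n) \<le> (1 - \<alpha>) * S_k k (?D + ?A) + (2 * \<alpha> - 1) * S_k k ?D"
      unfolding A_alpha_path_eq_signless_laplacian_deg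
      by (intro S_k_smult_add_le[OF Q path_deg_carrier path_deg_symmetric _ _ assms(2)]) auto
    also have "\<dots> \<le> (1 - \<alpha>) * S_k k (?D + ?A) + (2 * \<alpha> - 1) * (2 * real k)"
      using S_k_path_deg_le \<alpha> by (intro add_left_mono mult_left_mono) auto
    finally show "S_k k (A_alpha_path \<alpha> n) \<le>
             2 * \<alpha> * k + (1 - \<alpha>) * ((1 / sin (pi / (2 * n))) * sin ((2 * k + 1) * pi / (2 * n)) - 1)"
      unfolding S_Q by (simp add: algebra_simps)
  qed
qed

end
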